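(* In the $q$-shuffle algebra $\mathbb V$, the following three subalgebras coincide: (i) the subalgebra generated by $\{C_n\}_{n=1}^\infty$; (ii) the subalgebra generated by $\{D_n\}_{n=1}^\infty$; (iii) the subalgebra generated by $\{\tilde G_n\}_{n=1}^\infty$.
   Context: Let $\mathbb F$ be a field and let $q\in\mathbb F$ be nonzero and not a root of unity. Let $[m]_q=(q^m-q^{-m})/(q-q^{-1})$. Let $\mathbb V$ be the free associative $\mathbb F$-algebra on noncommuting $x,y$, with basis the words (including $1$). Juxtaposition denotes concatenation. Set $\langle x,x\rangle=\langle y,y\rangle=2$ and $\langle x,y\rangle=\langle y,x\rangle=-2$. The $q$-shuffle product $\star$ is the bilinear product determined as follows: - $1\star v=v\star 1=v$; - for nontrivial words $u=u_1\cdots u_r$ and $v=v_1\cdots v_s$, $$u\star v=u_1((u_2\cdots u_r)\star v)+v_1(u\star(v_2\cdots v_s))q^{\langle u_1,v_1\rangle+\cdots+\langle u_r,v_1\rangle}.$$ This makes $\mathbb V$ an associative algebra, the $q$-shuffle algebra. Subalgebras are taken with respect to $\star$. For $k\in\mathbb N$, let $\tilde G_k=xyxy\cdots xy$ be the word of length $2k$, with $\tilde G_0=1$. Define $D_0=1$ and, for $n\ge1$, define $D_n$ recursively by $\sum_{i=0}^n D_i\star\tilde G_{n-i}=0$. Let $\overline x=1$ and $\overline y=-1$. A word $v_1\cdots v_m$ is Catalan if $\overline v_1+\cdots+\overline v_i\ge0$ for $1\le i\le m-1$ and $\overline v_1+\cdots+\overline v_m=0$. For $n\in\mathbb N$, $$C_n=\sum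 v_1\cdots v_{2n}\,[1]_q[1+\overline v_1]_q\cdots[1+\overline v_1+\cdots+\overline v_{2n}]_q,$$ where the sum is over Catalan words of length $2n$. *)

theory Defs
  imports Main
begin

datatype letter = X | Y

type_synonym word = "letter list"

text \<open>Elements of the free algebra V over a field 'a are represented as
  functions from words to coefficients (finitely supported in practice).\<close>
type_synonym 'a vect = "word \<Rightarrow> 'a"

definition wd :: "word \<Rightarrow> 'a::field vect" where
  "wd u = (\<lambda>w. if w = u then 1 else 0)"

definition pair :: "letter \<Rightarrow> letter \<Rightarrow> int" where
  "pair a b = (if a = b then 2 else -2)"

definition bar :: "letter \<Rightarrow> int" where
  "bar a = (if a = X then 1 else -1)"

fun qsh :: "'a::field \<Rightarrow> word \<Rightarrow> word \<Rightarrow> 'a vect" where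
  "qsh q [] v = wd v"
| "qsh q (a # u) [] = wd (a # u)"
| "qsh q (a # u) (b # v) =
     (\<lambda>w. case w of [] \<Rightarrow> 0
        | c # w' \<Rightarrow> (if c = a then qsh q u (b # v) w' else 0)
                  + (if c = b then q powi (\<Sum>l\<leftarrow>a # u. pair l b) * qsh q (a # u) v w' else 0))"

definition shuf :: "'a::field \<Rightarrow> 'a vect \<Rightarrow> 'a vect \<Rightarrow> 'a vect" where
  "shuf q f g = (\<lambda>w. \<Sum>u\<in>{u. f u \<noteq> 0}. \<Sum>v\<in>{v. g v \<noteq> 0}. f u * g v * qsh q u v w)"

inductive_set gen_subalg :: "'a::field \<Rightarrow> 'a vect set \<Rightarrow> 'a vect set"
  for q :: 'a and S :: "'a vect set" where
  one: "wd [] \<in> gen_subalg q S"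
| base: "s \<in> S \<Longrightarrow> s \<in> gen_subalg q S"
| add: "f \<in> gen_subalg q S \<Longrightarrow> g \<in> gen_subalg q S \<Longrightarrow> (\<lambda>w. f w + g w) \<in> gen_subalg q S"
| smult: "f \<in> gen_subalg q S \<Longrightarrow> (\<lambda>w. c * f w) \<in> gen_subalg q S"
| mult: "f \<in> gen_subalg q S \<Longrightarrow> g \<in> gen_subalg q S \<Longrightarrow> shuf q f g \<in> gen_subalg q S"

definition Gt :: "nat \<Rightarrow> 'a::field vect" where
  "Gt k = wd (concat (replicate k [X, Y]))"

text \<open>D_0 = 1, and \<Sum>_{i=0}^n D_i \<star> \<tilde>G_{n-i} = 0 for n \<ge> 1 (using \<tilde>G_0 = 1).\<close>
function Dn :: "'a::field \<Rightarrow> nat \<Rightarrow> 'a vect" where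
  "Dn q n = (if n = 0 then wd []
             else (\<lambda>w. - (\<Sum>i\<in>{..<n}. shuf q (Dn q i) (Gt (n - i)) w)))"
  by auto
termination
  by (relation "measure (\<lambda>(q, n). n)") auto

definition qint :: "'a::field \<Rightarrow> int \<Rightarrow> 'a" where
  "qint q m = (q powi m - q powi (-m)) / (q - inverse q)"

definition hsum :: "word \<Rightarrow> nat \<Rightarrow> int" where
  "hsum w i = (\<Sum>j<i. bar (w ! j))"

definition catalan :: "word \<Rightarrow> bool" where
  "catalan w \<longleftrightarrow> (\<forall>i. 1 \<le> i \<and> i \<le> length w - 1 \<longrightarrow> hsum w i \<ge> 0) \<and> hsum w (length w) = 0"

definition Cn :: "'a::field \<Rightarrow> nat \<Rightarrow> 'a vect" where
  "Cn q n = (\<lambda>w. if length w = 2 * n \<and> catalan w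
                 then (\<Prod>i\<in>{0..2 * n}. qint q (1 + hsum w i)) else 0)"

end

theory Submission
  imports Defs
begin

text \<open>Both \<open>C\<^sub>n\<close> and \<open>(-1)\<^sup>n D\<^sub>n\<close> are sums over Catalan words, weighted by
  products of q-integers along the lattice path of the word: the step from height \<open>h\<close> to
  \<open>h'\<close> has weight \<open>[1 + h']\<^sub>q\<close> for \<open>C\<close> and \<open>[max h h']\<^sub>q\<close> for \<open>D\<close>.  The coefficients of a
  shuffle convolution \<open>\<Sum>\<^sub>j \<alpha>\<^sup>j \<Phi>\<^sub>n\<^sub>-\<^sub>j \<star> G\<^sub>j\<close> of such a path series with the words \<open>G\<^sub>j = (xy)\<^sup>j\<close>
  obey a letter-by-letter recursion, whose state is the current height of the path and
  whether one is inside an \<open>xy\<close>-block.  Solving it in closed form gives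
  \<open>\<Sum>\<^sub>i D\<^sub>i \<star> G\<^sub>n\<^sub>-\<^sub>i = 0\<close> for the \<open>D\<close>-weights (so \<open>D\<^sub>n\<close> is the claimed path series) and
  \<open>\<Sum>\<^sub>j (-q)\<^sup>j C\<^sub>n\<^sub>-\<^sub>j \<star> G\<^sub>j = (-q)\<^sup>-\<^sup>n D\<^sub>n\<close>.  Each of these two triangular relations
  expresses one generator through generators of lower index, except that recovering \<open>D\<^sub>n\<close>
  from the \<open>C\<close>'s requires dividing by \<open>(-q)\<^sup>-\<^sup>n + (-q)\<^sup>n\<close>, which is nonzero because \<open>q\<close> is
  not a root of unity.\<close>

section \<open>Words and the q-shuffle product\<close>

lemma bar_X [simp]: "bar X = 1" and bar_Y [simp]: "bar Y = -1"
  by (simp_all add: bar_def)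

lemma finite_words_length_le [simp]: "finite {u :: word. length u \<le> N}"
proof -
  have "(UNIV :: letter set) = {X, Y}"
    using letter.exhaust by auto
  then have "finite (UNIV :: letter set)"
    by (metis finite.emptyI finite.insertI)
  then show ?thesis
    using finite_lists_length_le[of "UNIV :: letter set" N] by simp
qed

lemma qsh_Nil_right [simp]: "qsh q u [] = wd u"
  by (cases u) auto

lemma qsh_at_Nil: "qsh q u v [] = (if u = [] \<and> v = [] then 1 else 0)"
  by (cases u; cases v) (auto simp: wd_def)

lemma qsh_at_Cons:
  "qsh q u v (c # s) =
     (case u of [] \<Rightarrow> 0 | a # u' \<Rightarrow> if a = c then qsh q u' v s else 0) +
     (case v of [] \<Rightarrow> 0 | b # v' \<Rightarrow> if b = c then q powi (\<Sum>l\<leftarrow>u. pair l c) * qsh q u v' s else 0)"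
  by (cases u; cases v) (auto simp: wd_def)

lemma qsh_nonzero_length: "qsh q u v s \<noteq> 0 \<Longrightarrow> length s = length u + length v"
proof (induction s arbitrary: u v)
  case Nil
  then show ?case
    by (simp add: qsh_at_Nil split: if_splits)
next
  case (Cons c s)
  then consider
      "(case u of [] \<Rightarrow> 0 | a # u' \<Rightarrow> if a = c then qsh q u' v s else 0) \<noteq> 0"
    | "(case v of [] \<Rightarrow> 0 | b # v' \<Rightarrow> if b = c then q powi (\<Sum>l\<leftarrow>u. pair l c) * qsh q u v' s else 0) \<noteq> 0"
    by (force simp: qsh_at_Cons)
  then show ?case
    by cases (use Cons.IH in \<open>auto split: list.splits if_splits\<close>)
qed

lemma support_wd: "{v. (wd t :: 'a::field vect) v \<noteq> 0} = {t}"
  by (auto simp: wd_def)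

lemma shuf_wd_right:
  assumes "finite A" "{u. f u \<noteq> 0} \<subseteq> A"
  shows "shuf q f (wd t) w = (\<Sum>u\<in>A. f u * qsh q u t w)"
proof -
  have "shuf q f (wd t) w = (\<Sum>u | f u \<noteq> 0. f u * qsh q u t w)"
    by (simp add: shuf_def support_wd wd_def)
  also have "\<dots> = (\<Sum>u\<in>A. f u * qsh q u t w)"
    by (rule sum.mono_neutral_left) (use assms in auto)
  finally show ?thesis .
qed

lemma shuf_wd_Nil_right:
  assumes "finite {u. f u \<noteq> 0}"
  shows "shuf q f (wd []) = f"
proof
  fix w
  have "shuf q f (wd []) w = (\<Sum>u | f u \<noteq> 0. if u = w then f u else 0)"
    unfolding shuf_wd_right[OF assms subset_refl] by (intro sum.cong) (auto simp: wd_def)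
  then show "shuf q f (wd []) w = f w"
    using assms by (simp add: sum.delta)
qed

lemma shuf_wd_Nil_left:
  assumes "finite {v. g v \<noteq> 0}"
  shows "shuf q (wd []) g = g"
proof
  fix w
  have "shuf q (wd []) g w = (\<Sum>v | g v \<noteq> 0. if v = w then g v else 0)"
    by (simp add: shuf_def support_wd) (intro sum.cong, auto simp: wd_def)
  then show "shuf q (wd []) g w = g w"
    using assms by (simp add: sum.delta)
qed

definition homogeneous :: "nat \<Rightarrow> 'a::zero vect \<Rightarrow> bool" where
  "homogeneous m f \<longleftrightarrow> (\<forall>u. f u \<noteq> 0 \<longrightarrow> length u = m)"

lemma homogeneous_finite_support: "homogeneous m f \<Longrightarrow> finite {u. f u \<noteq> 0}"
  by (rule finite_subset[of _ "{u. length u \<le> m}"]) (auto simp: homogeneous_def)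

lemma shuf_wd_eq_0_if_length:
  assumes "homogeneous m f" "length w \<noteq> m + length t"
  shows "shuf q f (wd t) w = 0"
proof -
  have summand_0: "f u * qsh q u t w = 0" for u
    using assms qsh_nonzero_length[of q u t w] by (auto simp: homogeneous_def)
  show ?thesis
    by (simp add: shuf_wd_right[OF homogeneous_finite_support[OF assms(1)] subset_refl] summand_0)
qed

definition xy_word :: "nat \<Rightarrow> word" where
  "xy_word j = concat (replicate j [X, Y])"

lemma xy_word_0 [simp]: "xy_word 0 = []"
  and xy_word_Suc: "xy_word (Suc j) = X # Y # xy_word j"
  by (simp_all add: xy_word_def)

lemma length_xy_word [simp]: "length (xy_word j) = 2 * j"
  by (induction j) (simp_all add: xy_word_Suc)

lemma Gt_eq_wd_xy_word: "Gt j = wd (xy_word j)"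
  by (simp add: Gt_def xy_word_def)

lemma Gt_0: "Gt 0 = wd []"
  by (simp add: Gt_eq_wd_xy_word)

lemma homogeneous_Gt: "homogeneous (2 * j) (Gt j)"
  by (simp add: homogeneous_def Gt_eq_wd_xy_word wd_def)

section \<open>Weighted lattice paths\<close>

definition height :: "word \<Rightarrow> int" where
  "height u = (\<Sum>l\<leftarrow>u. bar l)"

lemma height_Nil [simp]: "height [] = 0"
  and height_Cons [simp]: "height (c # u) = bar c + height u"
  and height_append [simp]: "height (u @ v) = height u + height v"
  by (simp_all add: height_def)

lemma sum_list_pair: "(\<Sum>l\<leftarrow>u. pair l c) = 2 * bar c * height u"
proof -
  have "pair l c = 2 * bar c * bar l" for l
    by (cases l; cases c) (simp_all add: pair_def)
  then show ?thesis
    by (induction u) (simp_all add: algebra_simps)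
qed

lemma height_plus_count_Y: "height u + 2 * int (count_list u Y) = int (length u)"
proof (induction u)
  case (Cons c u)
  then show ?case
    by (cases c) auto
qed simp

fun path_weight :: "(int \<Rightarrow> int \<Rightarrow> 'a::comm_semiring_1) \<Rightarrow> int \<Rightarrow> word \<Rightarrow> 'a" where
  "path_weight om h [] = 1"
| "path_weight om h (c # u) = om h (h + bar c) * path_weight om (h + bar c) u"

lemma path_weight_snoc:
  "path_weight om h (u @ [c]) = path_weight om h u * om (h + height u) (h + height u + bar c)"
  by (induction u arbitrary: h) (simp_all add: algebra_simps)

definition path_weight_to_0 :: "(int \<Rightarrow> int \<Rightarrow> 'a::comm_semiring_1) \<Rightarrow> int \<Rightarrow> word \<Rightarrow> 'a" where
  "path_weight_to_0 om h u = (if h + height u = 0 then path_weight om h u else 0)"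

lemma path_weight_to_0_Nil [simp]: "path_weight_to_0 om h [] = (if h = 0 then 1 else 0)"
  by (simp add: path_weight_to_0_def)

lemma path_weight_to_0_Cons:
  "path_weight_to_0 om h (c # u) = om h (h + bar c) * path_weight_to_0 om (h + bar c) u"
  by (simp add: path_weight_to_0_def add.assoc)

lemma height_if_path_weight_to_0_nonzero: "path_weight_to_0 om h u \<noteq> 0 \<Longrightarrow> height u = - h"
  by (simp add: path_weight_to_0_def split: if_splits)

definition path_series :: "(int \<Rightarrow> int \<Rightarrow> 'a::comm_semiring_1) \<Rightarrow> nat \<Rightarrow> 'a vect" where
  "path_series om i u = (if length u = 2 * i then path_weight_to_0 om 0 u else 0)"

lemma homogeneous_path_series: "homogeneous (2 * i) (path_series om i)"
  by (simp add: homogeneous_def path_series_def)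

section \<open>The transfer recursion\<close>

definition xy_tail :: "bool \<Rightarrow> nat \<Rightarrow> word" where
  "xy_tail b j = (if b then Y # xy_word j else xy_word j)"

lemma xy_tail_True: "xy_tail True j = Y # xy_tail False j"
  and xy_tail_False_0: "xy_tail False 0 = []"
  and xy_tail_False_Suc: "xy_tail False (Suc j) = X # xy_tail True j"
  by (simp_all add: xy_tail_def xy_word_Suc)

lemma length_xy_tail_ge: "length (xy_tail b j) \<ge> j"
  by (simp add: xy_tail_def)

definition transfer_sum ::
    "'a::field \<Rightarrow> (int \<Rightarrow> int \<Rightarrow> 'a) \<Rightarrow> 'a \<Rightarrow> nat \<Rightarrow> nat \<Rightarrow> int \<Rightarrow> bool \<Rightarrow> word \<Rightarrow> 'a" where
  "transfer_sum q om \<alpha> N M h b s =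
     (\<Sum>u | length u \<le> N. \<Sum>j\<le>M. \<alpha> ^ j * path_weight_to_0 om h u * qsh q u (xy_tail b j) s)"

lemma qsh_xy_tail_at_Nil: "qsh q u (xy_tail b j) [] = (if u = [] \<and> \<not> b \<and> j = 0 then 1 else 0)"
  using length_xy_word[of j] by (auto simp: qsh_at_Nil xy_tail_def simp del: length_xy_word)

lemma transfer_sum_Nil: "transfer_sum q om \<alpha> N M h b [] = (if \<not> b \<and> h = 0 then 1 else 0)"
proof -
  have "(\<Sum>j\<le>M. \<alpha> ^ j * path_weight_to_0 om h u * qsh q u (xy_tail b j) [])
      = (if u = [] then if b then 0 else path_weight_to_0 om h [] else 0)" for u
    by (simp add: qsh_xy_tail_at_Nil if_distrib[of "\<lambda>x. _ * x"] sum.delta' cong: if_cong)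
  then show ?thesis
    by (simp add: transfer_sum_def sum.delta)
qed

lemma sum_words_Cons:
  fixes c :: letter
  shows "(\<Sum>u | length u \<le> Suc N. case u of [] \<Rightarrow> 0 | a # u' \<Rightarrow> if a = c then g u' else 0)
   = (\<Sum>u | length u \<le> N. g u)"
proof -
  have "(\<Sum>u | length u \<le> Suc N. case u of [] \<Rightarrow> 0 | a # u' \<Rightarrow> if a = c then g u' else 0)
      = (\<Sum>u\<in>Cons c ` {u. length u \<le> N}. case u of [] \<Rightarrow> 0 | a # u' \<Rightarrow> if a = c then g u' else 0)"
    by (rule sum.mono_neutral_right) (auto split: list.splits)
  also have "\<dots> = (\<Sum>u | length u \<le> N. g u)"
    by (subst sum.reindex) auto
  finally show ?thesis .
qed

lemma transfer_sum_Cons: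
  "transfer_sum q om \<alpha> (Suc N) (Suc M) h b (c # s) =
     om h (h + bar c) * transfer_sum q om \<alpha> N (Suc M) (h + bar c) b s
   + (if \<not> b \<and> c = X then \<alpha> * q powi (- 2 * h) * transfer_sum q om \<alpha> (Suc N) M h True s else 0)
   + (if b \<and> c = Y then q powi (2 * h) * transfer_sum q om \<alpha> (Suc N) (Suc M) h False s else 0)"
proof -
  let ?W = "path_weight_to_0 om h"
  define path_step where "path_step u j =
    (case u of [] \<Rightarrow> 0 | a # u' \<Rightarrow> if a = c then qsh q u' (xy_tail b j) s else 0)" for u j
  define word_step where "word_step u j =
    (case xy_tail b j of [] \<Rightarrow> 0
     | a # v' \<Rightarrow> if a = c then q powi (\<Sum>l\<leftarrow>u. pair l c) * qsh q u v' s else 0)" for u j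
  have "transfer_sum q om \<alpha> (Suc N) (Suc M) h b (c # s)
      = (\<Sum>u | length u \<le> Suc N. \<Sum>j\<le>Suc M. \<alpha> ^ j * ?W u * path_step u j)
      + (\<Sum>u | length u \<le> Suc N. \<Sum>j\<le>Suc M. \<alpha> ^ j * ?W u * word_step u j)"
    unfolding transfer_sum_def qsh_at_Cons path_step_def word_step_def
    by (simp add: distrib_left sum.distrib)
  moreover have "(\<Sum>u | length u \<le> Suc N. \<Sum>j\<le>Suc M. \<alpha> ^ j * ?W u * path_step u j)
      = om h (h + bar c) * transfer_sum q om \<alpha> N (Suc M) (h + bar c) b s"
  proof -
    have "(\<Sum>j\<le>Suc M. \<alpha> ^ j * ?W u * path_step u j)
        = (case u of [] \<Rightarrow> 0 | a # u' \<Rightarrow> if a = c then om h (h + bar c) *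
             (\<Sum>j\<le>Suc M. \<alpha> ^ j * path_weight_to_0 om (h + bar c) u' * qsh q u' (xy_tail b j) s)
           else 0)" for u
      by (cases u) (auto simp: path_step_def path_weight_to_0_Cons sum_distrib_left algebra_simps)
    then show ?thesis
      by (simp add: sum_words_Cons transfer_sum_def sum_distrib_left)
  qed
  moreover have "(\<Sum>u | length u \<le> Suc N. \<Sum>j\<le>Suc M. \<alpha> ^ j * ?W u * word_step u j)
      = (if \<not> b \<and> c = X then \<alpha> * q powi (- 2 * h) * transfer_sum q om \<alpha> (Suc N) M h True s else 0)
      + (if b \<and> c = Y then q powi (2 * h) * transfer_sum q om \<alpha> (Suc N) (Suc M) h False s else 0)"
  proof (cases b)
    case True
    have "\<alpha> ^ j * ?W u * word_step u j
        = (if c = Y then q powi (2 * h) * (\<alpha> ^ j * ?W u * qsh q u (xy_tail False j) s) else 0)" for u j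
    proof (cases "?W u = 0")
      case False
      then have "height u = - h"
        by (rule height_if_path_weight_to_0_nonzero)
      with \<open>b\<close> show ?thesis
        by (simp add: word_step_def xy_tail_True sum_list_pair)
    qed simp
    with True show ?thesis
      by (simp add: transfer_sum_def sum_distrib_left del: sum.atMost_Suc)
  next
    case False
    have "\<alpha> ^ Suc j * ?W u * word_step u (Suc j)
        = (if c = X then \<alpha> * q powi (- 2 * h) * (\<alpha> ^ j * ?W u * qsh q u (xy_tail True j) s)
           else 0)" for u j
    proof (cases "?W u = 0")
      case False
      then have "height u = - h"
        by (rule height_if_path_weight_to_0_nonzero)
      with \<open>\<not> b\<close> show ?thesis
        by (simp add: word_step_def xy_tail_False_Suc sum_list_pair)
    qed simp
    moreover have "word_step u 0 = 0" for u
      using False by (simp add: word_step_def xy_tail_False_0)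
    ultimately have "(\<Sum>j\<le>Suc M. \<alpha> ^ j * ?W u * word_step u j)
        = (if c = X then \<alpha> * q powi (- 2 * h) *
             (\<Sum>j\<le>M. \<alpha> ^ j * ?W u * qsh q u (xy_tail True j) s) else 0)" for u
      by (simp only: sum.atMost_Suc_shift) (simp add: sum_distrib_left del: sum.atMost_Suc)
    with False show ?thesis
      by (simp add: transfer_sum_def sum_distrib_left del: sum.atMost_Suc)
  qed
  ultimately show ?thesis
    by simp
qed

lemma transfer_sum_bounds:
  assumes "length s \<le> N" "length s \<le> M"
  shows "transfer_sum q om \<alpha> N M h b s = transfer_sum q om \<alpha> (length s) (length s) h b s"
proof -
  let ?L = "length s"
  let ?F = "\<lambda>u j. \<alpha> ^ j * path_weight_to_0 om h u * qsh q u (xy_tail b j) s"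
  have vanish: "?F u j = 0" if "\<not> (length u \<le> ?L \<and> j \<le> ?L)" for u j
    using that qsh_nonzero_length[of q u "xy_tail b j" s] length_xy_tail_ge[of j b] by auto
  have "(\<Sum>j\<le>M. ?F u j) = (if length u \<le> ?L then \<Sum>j\<le>?L. ?F u j else 0)" for u
  proof (cases "length u \<le> ?L")
    case True
    then show ?thesis
      by (simp, intro sum.mono_neutral_right) (use assms vanish in auto)
  qed (simp add: vanish)
  then have "transfer_sum q om \<alpha> N M h b s
      = (\<Sum>u | length u \<le> N. if length u \<le> ?L then \<Sum>j\<le>?L. ?F u j else 0)"
    by (simp add: transfer_sum_def)
  also have "\<dots> = (\<Sum>u | length u \<le> ?L. \<Sum>j\<le>?L. ?F u j)"
    using assms by (intro sum.mono_neutral_cong_right) auto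
  finally show ?thesis
    by (simp add: transfer_sum_def)
qed

text \<open>\<^term>\<open>transfer q om \<alpha> h b s\<close> is the coefficient of \<open>s\<close> in the q-shuffle product of the
  formal series \<open>\<Sum>\<^sub>u path_weight_to_0 om h u \<cdot> u\<close> and \<open>\<Sum>\<^sub>j \<alpha>\<^sup>j \<cdot> xy_tail b j\<close>;
  by \<open>transfer_sum_bounds\<close> the truncation of both series at \<open>length s\<close> is harmless.\<close>

definition transfer :: "'a::field \<Rightarrow> (int \<Rightarrow> int \<Rightarrow> 'a) \<Rightarrow> 'a \<Rightarrow> int \<Rightarrow> bool \<Rightarrow> word \<Rightarrow> 'a" where
  "transfer q om \<alpha> h b s = transfer_sum q om \<alpha> (length s) (length s) h b s"

lemma transfer_Nil: "transfer q om \<alpha> h b [] = (if \<not> b \<and> h = 0 then 1 else 0)"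
  by (simp add: transfer_def transfer_sum_Nil)

lemma transfer_Cons:
  "transfer q om \<alpha> h b (c # s) =
     om h (h + bar c) * transfer q om \<alpha> (h + bar c) b s
   + (if \<not> b \<and> c = X then \<alpha> * q powi (- 2 * h) * transfer q om \<alpha> h True s else 0)
   + (if b \<and> c = Y then q powi (2 * h) * transfer q om \<alpha> h False s else 0)"
  using transfer_sum_Cons[of q om \<alpha> "length s" "length s" h b c s]
    transfer_sum_bounds[of s "length s" "Suc (length s)" q om \<alpha> "h + bar c" b]
    transfer_sum_bounds[of s "Suc (length s)" "length s" q om \<alpha> h True]
    transfer_sum_bounds[of s "Suc (length s)" "Suc (length s)" q om \<alpha> h False]
  by (simp add: transfer_def)

definition transfer_solution ::
    "'a::field \<Rightarrow> (int \<Rightarrow> int \<Rightarrow> 'a) \<Rightarrow> 'a \<Rightarrow> (word \<Rightarrow> 'a) \<Rightarrow> (word \<Rightarrow> 'a) \<Rightarrow> bool" where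
  "transfer_solution q om \<alpha> A0 A1 \<longleftrightarrow> (\<forall>p.
       A0 (p @ [X]) = om (height p) (height p + 1) * A0 p
     \<and> A1 (p @ [X]) = \<alpha> * q powi (- 2 * height p) * A0 p + om (height p - 1) (height p) * A1 p
     \<and> A0 (p @ [Y]) = om (height p) (height p - 1) * A0 p + q powi (2 * (height p - 1)) * A1 p
     \<and> A1 (p @ [Y]) = om (height p - 1) (height p - 2) * A1 p)"

text \<open>Moving the first letter of \<open>s\<close> to the end of \<open>p\<close> expands the transfer values by
  \<open>transfer_Cons\<close> and the coefficients \<open>A0 p\<close>, \<open>A1 p\<close> by the recursions of
  \<open>transfer_solution\<close>; the two expansions match, so the left-hand side depends only on \<open>p @ s\<close>.\<close>

lemma transfer_invariant:
  assumes "transfer_solution q om \<alpha> A0 A1"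
  shows "A0 p * transfer q om \<alpha> (height p) False s + A1 p * transfer q om \<alpha> (height p - 1) True s
       = (if height (p @ s) = 0 then A0 (p @ s) else 0)"
proof (induction s arbitrary: p)
  case Nil
  then show ?case
    by (simp add: transfer_Nil)
next
  case (Cons c s)
  have "A0 p * transfer q om \<alpha> (height p) False (c # s)
        + A1 p * transfer q om \<alpha> (height p - 1) True (c # s)
      = A0 (p @ [c]) * transfer q om \<alpha> (height (p @ [c])) False s
      + A1 (p @ [c]) * transfer q om \<alpha> (height (p @ [c]) - 1) True s"
    using assms[unfolded transfer_solution_def, rule_format, of p]
    by (cases c) (simp_all add: transfer_Cons algebra_simps)
  also have "\<dots> = (if height (p @ c # s) = 0 then A0 (p @ c # s) else 0)"
    using Cons.IH[of "p @ [c]"] by simp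
  finally show ?case .
qed

corollary transfer_closed_form:
  assumes "transfer_solution q om \<alpha> A0 A1" "A0 [] = 1" "A1 [] = 0"
  shows "transfer q om \<alpha> 0 False s = (if height s = 0 then A0 s else 0)"
  using transfer_invariant[OF assms(1), of "[]" s] assms(2,3) by simp

lemma transfer_eq_shuf_sum:
  assumes "length w = 2 * n"
  shows "transfer q om \<alpha> 0 False w = (\<Sum>j\<le>n. \<alpha> ^ j * shuf q (path_series om (n - j)) (Gt j) w)"
proof -
  let ?W = "path_weight_to_0 om 0"
  have shuf_eq: "shuf q (path_series om (n - j)) (Gt j) w
      = (\<Sum>u | length u \<le> 2 * n. ?W u * qsh q u (xy_word j) w)"
    if "j \<le> n" for j
  proof -
    have "shuf q (path_series om (n - j)) (Gt j) w
        = (\<Sum>u | length u \<le> 2 * n. path_series om (n - j) u * qsh q u (xy_word j) w)"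
      unfolding Gt_eq_wd_xy_word
      by (rule shuf_wd_right) (auto simp: path_series_def split: if_splits)
    also have "\<dots> = (\<Sum>u | length u \<le> 2 * n. ?W u * qsh q u (xy_word j) w)"
    proof (intro sum.cong refl)
      fix u
      have "qsh q u (xy_word j) w \<noteq> 0 \<Longrightarrow> length u = 2 * (n - j)"
        using qsh_nonzero_length[of q u "xy_word j" w] assms that by auto
      then show "path_series om (n - j) u * qsh q u (xy_word j) w = ?W u * qsh q u (xy_word j) w"
        by (auto simp: path_series_def)
    qed
    finally show ?thesis .
  qed
  have "transfer q om \<alpha> 0 False w
      = (\<Sum>j\<le>2 * n. \<alpha> ^ j * (\<Sum>u | length u \<le> 2 * n. ?W u * qsh q u (xy_word j) w))"
    using assms unfolding transfer_def transfer_sum_def xy_tail_def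
    by (subst sum.swap) (simp add: sum_distrib_left mult.assoc)
  also have "\<dots> = (\<Sum>j\<le>n. \<alpha> ^ j * (\<Sum>u | length u \<le> 2 * n. ?W u * qsh q u (xy_word j) w))"
  proof (intro sum.mono_neutral_right ballI)
    fix j
    assume "j \<in> {..2 * n} - {..n}"
    then have "qsh q u (xy_word j) w = 0" for u
      using qsh_nonzero_length[of q u "xy_word j" w] assms by fastforce
    then show "\<alpha> ^ j * (\<Sum>u | length u \<le> 2 * n. ?W u * qsh q u (xy_word j) w) = 0"
      by simp
  qed auto
  also have "\<dots> = (\<Sum>j\<le>n. \<alpha> ^ j * shuf q (path_series om (n - j)) (Gt j) w)"
    by (simp add: shuf_eq)
  finally show ?thesis .
qed

section \<open>Solutions for the weights of \<open>C\<^sub>n\<close> and \<open>D\<^sub>n\<close>\<close>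

lemma qint_0 [simp]: "qint q 0 = 0"
  by (simp add: qint_def)

lemma qint_1: "q - inverse q \<noteq> 0 \<Longrightarrow> qint q 1 = 1"
  by (simp add: qint_def)

lemmas power_int_split = power_int_add power_int_diff power_int_minus power_int_mult power2_eq_square

definition weight_C :: "'a::field \<Rightarrow> int \<Rightarrow> int \<Rightarrow> 'a" where
  "weight_C q h h' = qint q (1 + h')"

definition weight_D :: "'a::field \<Rightarrow> int \<Rightarrow> int \<Rightarrow> 'a" where
  "weight_D q h h' = qint q (max h h')"

definition weight_positive :: "'a::field \<Rightarrow> int \<Rightarrow> int \<Rightarrow> 'a" where
  "weight_positive q h h' = (if h' < 0 then 0 else qint q h')"

text \<open>On a word of length \<open>2n\<close> and height \<open>0\<close>, \<open>C_state0\<close> is \<open>q\<^sup>-\<^sup>n\<close> times the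
  \<open>weight_D\<close>-weight of the path (this is how \<open>D\<^sub>n\<close> enters the relation for \<open>C\<^sub>n\<close>), while
  \<open>D_state0\<close> vanishes on every nonempty word of height \<open>0\<close>.\<close>

definition C_state0 :: "'a::field \<Rightarrow> word \<Rightarrow> 'a" where
  "C_state0 q p = q powi (- int (count_list p Y)) * qint q (height p + 1) * path_weight (weight_D q) 0 p"

definition C_state1 :: "'a::field \<Rightarrow> word \<Rightarrow> 'a" where
  "C_state1 q p =
     - (q powi (2 - height p - int (count_list p Y)) * qint q (height p) * path_weight (weight_D q) 0 p)"

definition D_state0 :: "'a::field \<Rightarrow> word \<Rightarrow> 'a" where
  "D_state0 q p = q powi (- int (count_list p Y)) * path_weight (weight_positive q) 0 p"

definition D_state1 :: "'a::field \<Rightarrow> word \<Rightarrow> 'a" where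
  "D_state1 q p = (if height p = 0 then 0
     else - (q powi (1 - height p - int (count_list p Y)) * path_weight (weight_positive q) 0 p))"

lemma path_weight_positive_eq_0:
  "height p \<le> 0 \<Longrightarrow> p \<noteq> [] \<Longrightarrow> path_weight (weight_positive q) 0 p = 0"
proof (induction p rule: rev_induct)
  case (snoc c p)
  then show ?case
    by (cases c) (auto simp: path_weight_snoc weight_positive_def)
qed simp

context
  fixes q :: "'a::field"
  assumes q_nonzero: "q \<noteq> 0" and qint_denom_nonzero: "q - inverse q \<noteq> 0"
begin

lemma qint_eq_succ: "qint q h = (qint q (1 + h) - q powi (- h)) / q"
  using q_nonzero qint_denom_nonzero by (simp add: qint_def power_int_split field_simps)

lemma qint_eq_succ': "qint q h = q * (qint q (1 + h) - q powi h)"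
  using q_nonzero qint_denom_nonzero by (simp add: qint_def power_int_split field_simps)

lemma transfer_solution_C: "transfer_solution q (weight_C q) (- q) (C_state0 q) (C_state1 q)"
  unfolding transfer_solution_def
proof (intro allI conjI)
  fix p
  note C_defs = C_state0_def C_state1_def weight_C_def weight_D_def path_weight_snoc
  show "C_state0 q (p @ [X]) = weight_C q (height p) (height p + 1) * C_state0 q p"
    by (simp add: C_defs algebra_simps)
  show "C_state1 q (p @ [X]) = - q * q powi (- 2 * height p) * C_state0 q p
      + weight_C q (height p - 1) (height p) * C_state1 q p"
    using q_nonzero by (simp add: qint_eq_succ[of "height p"] C_defs power_int_split field_simps)
  show "C_state0 q (p @ [Y]) = weight_C q (height p) (height p - 1) * C_state0 q p
      + q powi (2 * (height p - 1)) * C_state1 q p"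
    using q_nonzero by (simp add: qint_eq_succ'[of "height p"] C_defs power_int_split field_simps)
  show "C_state1 q (p @ [Y]) = weight_C q (height p - 1) (height p - 2) * C_state1 q p"
    using q_nonzero by (simp add: C_defs power_int_split field_simps)
qed

lemma transfer_solution_D: "transfer_solution q (weight_D q) (- 1) (D_state0 q) (D_state1 q)"
  unfolding transfer_solution_def
proof (intro allI conjI)
  fix p
  note D_defs = D_state0_def D_state1_def weight_D_def weight_positive_def path_weight_snoc
    path_weight_positive_eq_0
  show "D_state0 q (p @ [X]) = weight_D q (height p) (height p + 1) * D_state0 q p"
    by (cases "p = []") (auto simp: D_defs)
  show "D_state1 q (p @ [X]) = - 1 * q powi (- 2 * height p) * D_state0 q p
      + weight_D q (height p - 1) (height p) * D_state1 q p"
    using q_nonzero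
    by (cases "p = []")
      (auto simp: qint_eq_succ[of "height p"] qint_1[OF qint_denom_nonzero] D_defs power_int_split field_simps)
  show "D_state0 q (p @ [Y]) = weight_D q (height p) (height p - 1) * D_state0 q p
      + q powi (2 * (height p - 1)) * D_state1 q p"
    using q_nonzero
    by (cases "p = []") (auto simp: qint_eq_succ'[of "height p - 1"] D_defs power_int_split field_simps)
  show "D_state1 q (p @ [Y]) = weight_D q (height p - 1) (height p - 2) * D_state1 q p"
    using q_nonzero by (cases "p = []") (auto simp: D_defs power_int_split field_simps)
qed

lemma transfer_weight_C:
  "transfer q (weight_C q) (- q) 0 False s = (if height s = 0 then C_state0 q s else 0)"
  by (rule transfer_closed_form[OF transfer_solution_C])
    (simp_all add: C_state0_def C_state1_def qint_1[OF qint_denom_nonzero])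

lemma transfer_weight_D:
  "transfer q (weight_D q) (- 1) 0 False s = (if height s = 0 then D_state0 q s else 0)"
  by (rule transfer_closed_form[OF transfer_solution_D]) (simp_all add: D_state0_def D_state1_def)

end

section \<open>Closed forms of \<open>C\<^sub>n\<close> and \<open>D\<^sub>n\<close> and the relation between them\<close>

lemma hsum_0 [simp]: "hsum u 0 = 0"
  by (simp add: hsum_def)

lemma hsum_append: "k \<le> length u \<Longrightarrow> hsum (u @ v) k = hsum u k"
  by (simp add: hsum_def nth_append)

lemma hsum_length: "hsum u (length u) = height u"
  by (induction u rule: rev_induct) (simp_all add: hsum_def nth_append height_def)

lemma path_weight_eq_prod:
  "path_weight om h u = (\<Prod>k\<in>{1..length u}. om (h + hsum u (k - 1)) (h + hsum u k))"
proof (induction u rule: rev_induct)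
  case (snoc c u)
  have "hsum (u @ [c]) (Suc (length u)) = height u + bar c"
    using hsum_length[of "u @ [c]"] by simp
  moreover have "(\<Prod>k\<in>{1..length u}. om (h + hsum (u @ [c]) (k - 1)) (h + hsum (u @ [c]) k))
      = (\<Prod>k\<in>{1..length u}. om (h + hsum u (k - 1)) (h + hsum u k))"
    by (intro prod.cong) (auto simp: hsum_append)
  ultimately show ?case
    using snoc hsum_append[of "length u" u "[c]"]
    by (simp add: path_weight_snoc hsum_length algebra_simps)
qed simp

lemma hsum_reaches_minus_one: "hsum u k < 0 \<Longrightarrow> \<exists>k0\<in>{1..k}. hsum u k0 = -1"
proof (induction k)
  case (Suc k)
  show ?case
  proof (cases "hsum u k < 0")
    case False
    then have "hsum u (Suc k) = -1"
      using Suc.prems by (cases "u ! k") (auto simp: hsum_def)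
    then show ?thesis
      by auto
  qed (use Suc.IH in force)
qed (simp add: hsum_def)

lemma Cn_eq_path_series:
  assumes "q - inverse q \<noteq> 0"
  shows "Cn q n = path_series (weight_C q) n"
proof
  fix w
  show "Cn q n w = path_series (weight_C q) n w"
  proof (cases "length w = 2 * n \<and> height w = 0")
    case True
    have weight_eq: "(\<Prod>i\<in>{0..2 * n}. qint q (1 + hsum w i)) = path_weight (weight_C q) 0 w"
      using True assms
      by (simp add: path_weight_eq_prod weight_C_def prod.atLeast_Suc_atMost qint_1[OF assms]
          flip: One_nat_def)
    have "path_weight (weight_C q) 0 w = 0" if not_catalan: "\<not> catalan w"
    proof -
      \<comment> \<open>the path dips to height \<open>-1\<close>, where the step weight \<open>[1 + (-1)]\<^sub>q\<close> vanishes\<close>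
      have "hsum w (length w) = 0"
        using True hsum_length[of w] by simp
      then obtain k where k: "1 \<le> k" "k \<le> length w - 1" "hsum w k < 0"
        using not_catalan by (auto simp: catalan_def not_le)
      then obtain k0 where "k0 \<in> {1..length w}" "hsum w k0 = -1"
        using hsum_reaches_minus_one[of w k] by force
      then show ?thesis
        by (auto simp: path_weight_eq_prod weight_C_def intro!: prod_zero bexI[of _ k0])
    qed
    with True weight_eq show ?thesis
      by (auto simp: Cn_def path_series_def path_weight_to_0_def)
  next
    case False
    then show ?thesis
      by (auto simp: Cn_def path_series_def path_weight_to_0_def catalan_def hsum_length)
  qed
qed

lemma shuf_smult_left: "shuf q (\<lambda>w. c * f w) g = (\<lambda>w. c * shuf q f g w)"
proof (cases "c = 0")
  case False
  then show ?thesis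
    by (simp add: shuf_def sum_distrib_left algebra_simps)
qed (simp add: shuf_def)

lemma neg_one_power_diff: "j \<le> n \<Longrightarrow> (- 1 :: 'a::comm_ring_1) ^ (n - j) = (- 1) ^ n * (- 1) ^ j"
proof -
  assume "j \<le> n"
  then obtain k where "n = j + k"
    using le_Suc_ex by blast
  then show ?thesis
    by (simp add: power_add algebra_simps flip: power_mult_distrib)
qed

declare Dn.simps [simp del]

lemma Dn_0: "Dn q 0 = wd []"
  by (simp add: Dn.simps)

lemma Dn_rec: "0 < n \<Longrightarrow> Dn q n w = - (\<Sum>i<n. shuf q (Dn q i) (Gt (n - i)) w)"
  by (simp add: Dn.simps)

lemma Gt_eq_Dn:
  assumes "0 < n"
  shows "Gt n w = - Dn q n w - (\<Sum>i\<in>{1..<n}. shuf q (Dn q i) (Gt (n - i)) w)"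
proof -
  have "{..<n} = insert 0 {1..<n}"
    using assms by auto
  moreover have "shuf q (Dn q 0) (Gt n) = Gt n"
    by (simp add: Dn_0 shuf_wd_Nil_left homogeneous_finite_support[OF homogeneous_Gt])
  ultimately show ?thesis
    using Dn_rec[OF assms, of q w] by simp
qed

context
  fixes q :: "'a::field"
  assumes q_nonzero: "q \<noteq> 0" and qint_denom_nonzero: "q - inverse q \<noteq> 0"
begin

lemma shuf_sum_path_series_D_Gt:
  assumes "0 < n"
  shows "(\<Sum>i\<le>n. (- 1) ^ i * shuf q (path_series (weight_D q) i) (Gt (n - i)) w) = 0"
proof (cases "length w = 2 * n")
  case True
  have "(\<Sum>i\<le>n. (- 1) ^ i * shuf q (path_series (weight_D q) i) (Gt (n - i)) w)
      = (\<Sum>j\<le>n. (- 1) ^ (n - j) * shuf q (path_series (weight_D q) (n - j)) (Gt j) w)"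
    unfolding atMost_atLeast0 by (subst sum.atLeastAtMost_rev) simp
  also have "\<dots> = (- 1) ^ n * (\<Sum>j\<le>n. (- 1) ^ j * shuf q (path_series (weight_D q) (n - j)) (Gt j) w)"
    by (simp add: sum_distrib_left) (intro sum.cong refl, simp add: neg_one_power_diff)
  also have "\<dots> = (- 1) ^ n * transfer q (weight_D q) (- 1) 0 False w"
    by (simp add: transfer_eq_shuf_sum[OF True])
  also have "\<dots> = (- 1) ^ n * (if height w = 0 then D_state0 q w else 0)"
    by (simp add: transfer_weight_D[OF q_nonzero qint_denom_nonzero])
  also have "\<dots> = 0"
  proof -
    have "w \<noteq> []"
      using True assms by auto
    then show ?thesis
      using path_weight_positive_eq_0[of w q] by (simp add: D_state0_def)
  qed
  finally show ?thesis .
next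
  case False
  then have "shuf q (path_series (weight_D q) i) (Gt (n - i)) w = 0" if "i \<le> n" for i
    unfolding Gt_eq_wd_xy_word using that
    by (intro shuf_wd_eq_0_if_length[OF homogeneous_path_series]) auto
  then show ?thesis
    by simp
qed

lemma Dn_eq_path_series: "Dn q n = (\<lambda>w. (- 1) ^ n * path_series (weight_D q) n w)"
proof (induction n rule: less_induct)
  case (less n)
  show ?case
  proof (cases "n = 0")
    case True
    then show ?thesis
      by (auto simp: Dn_0 path_series_def wd_def)
  next
    case False
    show ?thesis
    proof
      fix w
      have "Dn q n w = - (\<Sum>i<n. (- 1) ^ i * shuf q (path_series (weight_D q) i) (Gt (n - i)) w)"
        using False less.IH by (simp add: Dn_rec shuf_smult_left)
      also have "\<dots> = (- 1) ^ n * shuf q (path_series (weight_D q) n) (Gt 0) w"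
        using shuf_sum_path_series_D_Gt[of n w] False
        by (simp add: lessThan_Suc_atMost[symmetric] add_eq_0_iff)
      also have "\<dots> = (- 1) ^ n * path_series (weight_D q) n w"
        by (simp add: Gt_0 shuf_wd_Nil_right homogeneous_finite_support[OF homogeneous_path_series])
      finally show "Dn q n w = (- 1) ^ n * path_series (weight_D q) n w" .
    qed
  qed
qed

lemma shuf_sum_Cn_Gt:
  "(\<Sum>j\<le>n. (- q) ^ j * shuf q (Cn q (n - j)) (Gt j) w) = (- inverse q) ^ n * Dn q n w"
proof (cases "length w = 2 * n")
  case True
  have "(\<Sum>j\<le>n. (- q) ^ j * shuf q (Cn q (n - j)) (Gt j) w) = transfer q (weight_C q) (- q) 0 False w"
    by (simp add: transfer_eq_shuf_sum[OF True] Cn_eq_path_series[OF qint_denom_nonzero])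
  also have "\<dots> = (if height w = 0 then C_state0 q w else 0)"
    by (rule transfer_weight_C[OF q_nonzero qint_denom_nonzero])
  also have "\<dots> = (- inverse q) ^ n * Dn q n w"
  proof (cases "height w = 0")
    case True
    then have "int (count_list w Y) = int n"
      using height_plus_count_Y[of w] \<open>length w = 2 * n\<close> by simp
    moreover have "(- inverse q) ^ n * (- 1) ^ n = q powi (- int n)"
      by (simp add: power_int_minus power_mult_distrib[symmetric] power_inverse)
    ultimately show ?thesis
      using True \<open>length w = 2 * n\<close>
      by (simp add: C_state0_def Dn_eq_path_series path_series_def path_weight_to_0_def
          qint_1[OF qint_denom_nonzero] algebra_simps)
  qed (simp add: Dn_eq_path_series path_series_def path_weight_to_0_def)
  finally show ?thesis .
next
  case False
  then have "shuf q (Cn q (n - j)) (Gt j) w = 0" if "j \<le> n" for j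
    unfolding Gt_eq_wd_xy_word Cn_eq_path_series[OF qint_denom_nonzero] using that
    by (intro shuf_wd_eq_0_if_length[OF homogeneous_path_series]) auto
  with False show ?thesis
    by (simp add: Dn_eq_path_series path_series_def)
qed

lemma Cn_0: "Cn q 0 = wd []"
  by (auto simp: Cn_eq_path_series[OF qint_denom_nonzero] path_series_def wd_def)

lemma homogeneous_Cn: "homogeneous (2 * n) (Cn q n)"
  by (simp add: Cn_eq_path_series[OF qint_denom_nonzero] homogeneous_path_series)

lemma Cn_eq_Dn_Gt:
  assumes "0 < n"
  shows "Cn q n w = (- inverse q) ^ n * Dn q n w - (- q) ^ n * Gt n w
           - (\<Sum>j\<in>{1..<n}. (- q) ^ j * shuf q (Cn q (n - j)) (Gt j) w)"
proof -
  have "{..n} = insert 0 (insert n {1..<n})"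
    using assms by auto
  moreover have "shuf q (Cn q n) (Gt 0) = Cn q n"
    by (simp add: Gt_0 shuf_wd_Nil_right homogeneous_finite_support[OF homogeneous_Cn])
  moreover have "shuf q (Cn q 0) (Gt n) = Gt n"
    by (simp add: Cn_0 shuf_wd_Nil_left homogeneous_finite_support[OF homogeneous_Gt])
  ultimately show ?thesis
    using shuf_sum_Cn_Gt[of n w] assms by (simp add: algebra_simps)
qed

lemma Dn_eq_Cn:
  assumes "0 < n"
  shows "((- inverse q) ^ n + (- q) ^ n) * Dn q n w
       = Cn q n w + (\<Sum>j\<in>{1..<n}. (- q) ^ j * shuf q (Cn q (n - j)) (Gt j) w)
         - (- q) ^ n * (\<Sum>i\<in>{1..<n}. shuf q (Dn q i) (Gt (n - i)) w)"
  using Cn_eq_Dn_Gt[OF assms, of w] Gt_eq_Dn[OF assms, of w q] by (simp add: algebra_simps)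

end

section \<open>The generated subalgebras\<close>

lemma gen_subalg_zero: "(\<lambda>w. 0) \<in> gen_subalg q S"
  using gen_subalg.smult[OF gen_subalg.one, where c = 0] by simp

lemma gen_subalg_shuf_sum:
  assumes "finite I" "\<And>i. i \<in> I \<Longrightarrow> f i \<in> gen_subalg q S" "\<And>i. i \<in> I \<Longrightarrow> g i \<in> gen_subalg q S"
  shows "(\<lambda>w. \<Sum>i\<in>I. c i * shuf q (f i) (g i) w) \<in> gen_subalg q S"
  using assms
proof (induction I rule: finite_induct)
  case empty
  then show ?case
    by (simp add: gen_subalg_zero)
next
  case (insert i I)
  then show ?case
    by (simp add: gen_subalg.add gen_subalg.smult gen_subalg.mult)
qed

lemma gen_subalg_subset:
  assumes "S \<subseteq> gen_subalg q T"
  shows "gen_subalg q S \<subseteq> gen_subalg q T"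
proof
  fix f
  assume "f \<in> gen_subalg q S"
  then show "f \<in> gen_subalg q T"
    by (induction rule: gen_subalg.induct) (use assms in \<open>auto intro: gen_subalg.intros\<close>)
qed

lemma Dn_in_gen_subalg_Gt: "Dn q n \<in> gen_subalg q {Gt n | n. n \<ge> 1}"
proof (induction n rule: less_induct)
  case (less n)
  show ?case
  proof (cases "n = 0")
    case False
    have "(\<lambda>w. \<Sum>i<n. (- 1) * shuf q (Dn q i) (Gt (n - i)) w) \<in> gen_subalg q {Gt n | n. n \<ge> 1}"
      using less.IH by (intro gen_subalg_shuf_sum) (auto intro!: gen_subalg.base)
    moreover have "Dn q n = (\<lambda>w. \<Sum>i<n. (- 1) * shuf q (Dn q i) (Gt (n - i)) w)"
      using False by (simp add: fun_eq_iff Dn_rec sum_negf)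
    ultimately show ?thesis
      by simp
  qed (simp add: Dn_0 gen_subalg.one)
qed

lemma Gt_in_gen_subalg_step:
  assumes "0 < n" "Dn q n \<in> gen_subalg q S"
    and "\<And>i. 0 < i \<Longrightarrow> i < n \<Longrightarrow> Dn q i \<in> gen_subalg q S"
    and "\<And>i. 0 < i \<Longrightarrow> i < n \<Longrightarrow> Gt i \<in> gen_subalg q S"
  shows "Gt n \<in> gen_subalg q S"
proof -
  have "(\<lambda>w. (- 1) * Dn q n w + (- 1) * (\<Sum>i\<in>{1..<n}. 1 * shuf q (Dn q i) (Gt (n - i)) w))
      \<in> gen_subalg q S"
    using assms by (intro gen_subalg.add gen_subalg.smult gen_subalg_shuf_sum) auto
  moreover have
    "Gt n = (\<lambda>w. (- 1) * Dn q n w + (- 1) * (\<Sum>i\<in>{1..<n}. 1 * shuf q (Dn q i) (Gt (n - i)) w))"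
    using assms(1) Gt_eq_Dn[of n _ q] by (simp add: fun_eq_iff)
  ultimately show ?thesis
    by simp
qed

lemma Gt_in_gen_subalg_Dn: "Gt n \<in> gen_subalg q {Dn q n | n. n \<ge> 1}"
proof (induction n rule: less_induct)
  case (less n)
  show ?case
  proof (cases "n = 0")
    case False
    show ?thesis
      by (rule Gt_in_gen_subalg_step) (use False less.IH in \<open>auto intro!: gen_subalg.base\<close>)
  qed (simp add: Gt_0 gen_subalg.one)
qed

context
  fixes q :: "'a::field"
  assumes q_nonzero: "q \<noteq> 0" and qint_denom_nonzero: "q - inverse q \<noteq> 0"
begin

lemma Cn_in_gen_subalg_Gt: "Cn q n \<in> gen_subalg q {Gt n | n. n \<ge> 1}"
proof (induction n rule: less_induct)
  case (less n)
  show ?case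
  proof (cases "n = 0")
    case False
    have "(\<lambda>w. (- inverse q) ^ n * Dn q n w + (- ((- q) ^ n)) * Gt n w
            + (- 1) * (\<Sum>j\<in>{1..<n}. (- q) ^ j * shuf q (Cn q (n - j)) (Gt j) w))
        \<in> gen_subalg q {Gt n | n. n \<ge> 1}"
      using False less.IH
      by (intro gen_subalg.add gen_subalg.smult gen_subalg_shuf_sum Dn_in_gen_subalg_Gt)
        (auto intro!: gen_subalg.base)
    moreover have "Cn q n = (\<lambda>w. (- inverse q) ^ n * Dn q n w + (- ((- q) ^ n)) * Gt n w
            + (- 1) * (\<Sum>j\<in>{1..<n}. (- q) ^ j * shuf q (Cn q (n - j)) (Gt j) w))"
      using False Cn_eq_Dn_Gt[OF q_nonzero qint_denom_nonzero, of n] by (simp add: fun_eq_iff)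
    ultimately show ?thesis
      by simp
  qed (simp add: Cn_0[OF q_nonzero qint_denom_nonzero] gen_subalg.one)
qed

lemma Dn_in_gen_subalg_Cn_step:
  assumes "0 < n" and nonzero: "(- inverse q) ^ n + (- q) ^ n \<noteq> 0"
    and lower: "\<And>i. i < n \<Longrightarrow>
      Dn q i \<in> gen_subalg q {Cn q n | n. n \<ge> 1} \<and> Gt i \<in> gen_subalg q {Cn q n | n. n \<ge> 1}"
  shows "Dn q n \<in> gen_subalg q {Cn q n | n. n \<ge> 1}"
proof -
  define \<kappa> where "\<kappa> = (- inverse q) ^ n + (- q) ^ n"
  define R where "R w = (\<Sum>j\<in>{1..<n}. (- q) ^ j * shuf q (Cn q (n - j)) (Gt j) w)" for w
  define S where "S w = (\<Sum>i\<in>{1..<n}. 1 * shuf q (Dn q i) (Gt (n - i)) w)" for w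
  have "(\<lambda>w. inverse \<kappa> * Cn q n w + inverse \<kappa> * R w + (- (inverse \<kappa> * (- q) ^ n)) * S w)
      \<in> gen_subalg q {Cn q n | n. n \<ge> 1}"
    unfolding R_def S_def using assms
    by (intro gen_subalg.add gen_subalg.smult gen_subalg_shuf_sum) (auto intro!: gen_subalg.base)
  moreover have
    "Dn q n = (\<lambda>w. inverse \<kappa> * Cn q n w + inverse \<kappa> * R w + (- (inverse \<kappa> * (- q) ^ n)) * S w)"
  proof
    fix w
    have "Dn q n w = inverse \<kappa> * (\<kappa> * Dn q n w)"
      using nonzero by (simp add: \<kappa>_def)
    also have "\<dots> = inverse \<kappa> * Cn q n w + inverse \<kappa> * R w + (- (inverse \<kappa> * (- q) ^ n)) * S w"
      unfolding \<kappa>_def Dn_eq_Cn[OF q_nonzero qint_denom_nonzero \<open>0 < n\<close>]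
      by (simp add: R_def S_def algebra_simps)
    finally show "Dn q n w = \<dots>" .
  qed
  ultimately show ?thesis
    by simp
qed

lemma Dn_Gt_in_gen_subalg_Cn:
  assumes "\<And>n. 0 < n \<Longrightarrow> (- inverse q) ^ n + (- q) ^ n \<noteq> 0"
  shows "Dn q n \<in> gen_subalg q {Cn q n | n. n \<ge> 1} \<and> Gt n \<in> gen_subalg q {Cn q n | n. n \<ge> 1}"
proof (induction n rule: less_induct)
  case (less n)
  show ?case
  proof (cases "n = 0")
    case False
    have D: "Dn q n \<in> gen_subalg q {Cn q n | n. n \<ge> 1}"
      by (rule Dn_in_gen_subalg_Cn_step) (use False assms less.IH in auto)
    moreover have "Gt n \<in> gen_subalg q {Cn q n | n. n \<ge> 1}"
      by (rule Gt_in_gen_subalg_step) (use False D less.IH in auto)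
    ultimately show ?thesis
      by simp
  qed (simp add: Dn_0 Gt_0 gen_subalg.one)
qed

end

lemma neg_inverse_power_plus_neg_power_nonzero:
  fixes q :: "'a::field"
  assumes "q \<noteq> 0" "q ^ (4 * n) \<noteq> 1"
  shows "(- inverse q) ^ n + (- q) ^ n \<noteq> 0"
proof
  assume sum_0: "(- inverse q) ^ n + (- q) ^ n = 0"
  have "(- inverse q) ^ n * (- q) ^ n = 1"
    using assms(1) by (simp flip: power_mult_distrib)
  moreover have "(- inverse q) ^ n = - ((- q) ^ n)"
    using sum_0 by (simp add: eq_neg_iff_add_eq_0)
  ultimately have "((- q) ^ n) ^ 2 = - 1"
    by (simp add: power2_eq_square minus_equation_iff)
  then have "((- q) ^ n) ^ 2 * ((- q) ^ n) ^ 2 = 1"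
    by simp
  then have "q ^ (4 * n) = 1"
    by (simp flip: power_add power_mult)
  with assms(2) show False
    by contradiction
qed

theorem corollary11p12:
  fixes q :: "'a::field"
  assumes "q \<noteq> 0"
    and "\<forall>n::nat. n \<ge> 1 \<longrightarrow> q ^ n \<noteq> 1"
  shows "gen_subalg q {Cn q n | n. n \<ge> 1} = gen_subalg q {Dn q n | n. n \<ge> 1}
       \<and> gen_subalg q {Dn q n | n. n \<ge> 1} = gen_subalg q {Gt n | n. n \<ge> 1}"
proof -
  have "q - inverse q \<noteq> 0"
  proof
    assume "q - inverse q = 0"
    then have "q ^ 2 = 1"
      using assms(1) by (simp add: power2_eq_square field_simps)
    with assms(2) show False
      by auto
  qed
  moreover have "(- inverse q) ^ n + (- q) ^ n \<noteq> 0" if "0 < n" for n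
    using that assms by (intro neg_inverse_power_plus_neg_power_nonzero) auto
  ultimately have "gen_subalg q {Cn q n | n. n \<ge> 1} = gen_subalg q {Gt n | n. n \<ge> 1}"
    using assms(1) Cn_in_gen_subalg_Gt Dn_Gt_in_gen_subalg_Cn
    by (intro equalityI gen_subalg_subset) blast+
  moreover have "gen_subalg q {Dn q n | n. n \<ge> 1} = gen_subalg q {Gt n | n. n \<ge> 1}"
    using Dn_in_gen_subalg_Gt Gt_in_gen_subalg_Dn by (intro equalityI gen_subalg_subset) blast+
  ultimately show ?thesis
    by simp
qed

end
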